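(* Let $s\in\mathbb{Z}$, and let $x\in G_{\alpha_s}$ and $y\in G_{\alpha_{s+1}}$ be such that $x\in \mathrm{Vor}_{G_{\alpha_{s+1}}}(y)$. Then $\mathrm{Vor}_{G_{\alpha_s}}(x)\subset \mathrm{Vor}_{G_{\alpha_{s+1}}}(y)$.
   Context: Fix $d\ge 1$, $\lambda>0$ and scales $\alpha_s:=\lambda 2^s$, $s\in\mathbb{Z}$. The grids $(G_{\alpha_s})_{s\in\mathbb{Z}}$ are subsets of $\mathbb{R}^d$ with $G_{\alpha_0}=\lambda\mathbb{Z}^d$ and, for every $s$, $G_{\alpha_{s+1}}=2(G_{\alpha_s}-O_s)+O_s+\frac{\alpha_s}{2}\varepsilon_s$ for some point $O_s\in G_{\alpha_s}$ and some sign vector $\varepsilon_s\in\{-1,+1\}^d$. Thus each $G_{\alpha_s}$ is a translate of $\alpha_s\mathbb{Z}^d$. For a grid $G$ and $x\in G$, $\mathrm{Vor}_G(x)$ denotes the Voronoi cell of $x$ with respect to $G$, i.e. the closed axis-parallel cube of side length $\alpha_s$ centered at $x$ when $G=G_{\alpha_s}$. *)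

theory Defs
  imports "HOL-Analysis.Analysis"
begin

definition scale :: "real \<Rightarrow> int \<Rightarrow> real" where
  "scale lam s = lam * 2 powi s"

definition scaled_lattice :: "real \<Rightarrow> (real ^ 'n) set" where
  "scaled_lattice lam = {x. \<exists>k :: 'n \<Rightarrow> int. x = (\<chi> i. lam * of_int (k i))}"

definition Vor :: "(real ^ 'n) set \<Rightarrow> real ^ 'n \<Rightarrow> (real ^ 'n) set" where
  "Vor G x = {z. \<forall>g\<in>G. dist z x \<le> dist z g}"

definition grid_family :: "real \<Rightarrow> (int \<Rightarrow> (real ^ 'n) set) \<Rightarrow> bool" where
  "grid_family lam G \<longleftrightarrow>
     G 0 = scaled_lattice lam \<and>
     (\<forall>s. \<exists>c\<in>G s. \<exists>\<epsilon> :: real ^ 'n. (\<forall>i. \<epsilon> $ i = 1 \<or> \<epsilon> $ i = -1) \<and>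
        G (s + 1) = (\<lambda>g. 2 *\<^sub>R (g - c) + c + (scale lam s / 2) *\<^sub>R \<epsilon>) ` G s)"

end

theory Submission
  imports Defs
begin

text \<open>
  Every grid G s is a translate c + a Z^d of the lattice a Z^d with a = scale lam s, because the
  doubling map g \<mapsto> 2 (g - c0) + c0 + (a/2) \<epsilon> carries c + a Z^d onto a translate of 2a Z^d.
  The Voronoi cell of a point of such a grid is the closed cube of side a around it.  Coordinatewise,
  a point y of G (s + 1) differs from a point x of G s by an odd multiple of a/2, since the shift
  (a/2) \<epsilon> is such an odd multiple and everything else is a multiple of a.  If x lies in the cube of side 2a
  around y, this odd multiple is \<plusminus>a/2 in every coordinate, and the cube of side a around x
  is contained in the cube of side 2a around y by the triangle inequality.
\<close>

lemma scale_add_one: "scale lam (s + 1) = 2 * scale lam s"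
  unfolding scale_def by (simp add: power_int_add_1)

lemma scale_pos: "lam > 0 \<Longrightarrow> scale lam s > 0"
  unfolding scale_def by simp

lemma dist_vec_le_coordinatewise:
  fixes z u v :: "real ^ 'n"
  assumes "\<And>j. dist (z $ j) (u $ j) \<le> dist (z $ j) (v $ j)"
  shows "dist z u \<le> dist z v"
  unfolding dist_vec_def using assms by (intro L2_set_mono) auto

lemma dist_vec_less_coordinatewise:
  fixes z u v :: "real ^ 'n"
  assumes "\<And>j. dist (z $ j) (u $ j) \<le> dist (z $ j) (v $ j)"
    and "dist (z $ i) (u $ i) < dist (z $ i) (v $ i)"
  shows "dist z u < dist z v"
proof -
  have "(\<Sum>j\<in>UNIV. (dist (z $ j) (u $ j))\<^sup>2) < (\<Sum>j\<in>UNIV. (dist (z $ j) (v $ j))\<^sup>2)"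
  proof (rule sum_strict_mono_ex1)
    show "\<forall>j\<in>UNIV. (dist (z $ j) (u $ j))\<^sup>2 \<le> (dist (z $ j) (v $ j))\<^sup>2"
      using assms(1) by (simp add: power_mono)
    show "\<exists>j\<in>UNIV. (dist (z $ j) (u $ j))\<^sup>2 < (dist (z $ j) (v $ j))\<^sup>2"
      using assms(2) by (intro bexI[of _ i]) (auto intro: power_strict_mono)
  qed simp
  then show ?thesis
    unfolding dist_vec_def L2_set_def by (rule real_sqrt_less_mono)
qed

lemma abs_le_abs_diff_int_multiple:
  fixes a t :: real
  assumes "a > 0" and "\<bar>t\<bar> \<le> a / 2"
  shows "\<bar>t\<bar> \<le> \<bar>t - a * of_int m\<bar>"
proof (cases "m = 0")
  case False
  then have "a \<le> \<bar>a * of_int m\<bar>"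
    using assms(1) by (simp add: abs_mult)
  then show ?thesis
    using assms(2) by linarith
qed simp

lemma abs_odd_half_multiple:
  fixes a :: real and m :: int
  assumes "a > 0" and "odd m" and "\<bar>a / 2 * of_int m\<bar> \<le> a"
  shows "\<bar>a / 2 * of_int m\<bar> = a / 2"
proof -
  have "a / 2 * \<bar>of_int m\<bar> \<le> a / 2 * 2"
    using assms(1,3) by (simp add: abs_mult)
  then have "\<bar>m\<bar> \<le> 2"
    using assms(1) by (simp only: mult_le_cancel_left_pos)
  with \<open>odd m\<close> have "\<bar>m\<bar> = 1"
    by presburger
  then show ?thesis
    using assms(1) by (simp add: abs_mult)
qed

definition shifted_lattice :: "real ^ 'n \<Rightarrow> real \<Rightarrow> (real ^ 'n) set" where
  "shifted_lattice c a = {v. \<forall>i. \<exists>k::int. v $ i = c $ i + a * of_int k}"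

lemma scaled_lattice_eq_shifted_lattice: "scaled_lattice lam = shifted_lattice 0 lam"
proof
  show "shifted_lattice 0 lam \<subseteq> scaled_lattice lam"
  proof
    fix x assume "x \<in> shifted_lattice 0 lam"
    then obtain k where "\<And>i. x $ i = lam * of_int (k i)"
      unfolding shifted_lattice_def by simp metis
    then show "x \<in> scaled_lattice lam"
      unfolding scaled_lattice_def by (auto simp: vec_eq_iff)
  qed
qed (auto simp: scaled_lattice_def shifted_lattice_def)

lemma shifted_lattice_diff:
  assumes "u \<in> shifted_lattice c a" and "v \<in> shifted_lattice c a"
  obtains k :: int where "u $ i - v $ i = a * of_int k"
proof -
  obtain ku kv :: int where "u $ i = c $ i + a * of_int ku" and "v $ i = c $ i + a * of_int kv"
    using assms unfolding shifted_lattice_def by blast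
  then have "u $ i - v $ i = a * of_int (ku - kv)"
    by (simp add: algebra_simps)
  then show thesis by (rule that)
qed

lemma shifted_lattice_add_axis:
  assumes "x \<in> shifted_lattice c a"
  shows "x + (a * of_int d) *\<^sub>R axis i 1 \<in> shifted_lattice c a"
  unfolding shifted_lattice_def mem_Collect_eq
proof
  fix j
  obtain k :: int where k: "x $ j = c $ j + a * of_int k"
    using assms unfolding shifted_lattice_def by blast
  show "\<exists>k::int. (x + (a * of_int d) *\<^sub>R axis i 1) $ j = c $ j + a * of_int k"
    by (intro exI[of _ "k + (if j = i then d else 0)"]) (simp add: k axis_def algebra_simps)
qed

lemma image_doubling_shifted_lattice:
  "(\<lambda>v. 2 *\<^sub>R v + b) ` shifted_lattice c a = shifted_lattice (2 *\<^sub>R c + b) (2 * a)"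
proof
  show "(\<lambda>v. 2 *\<^sub>R v + b) ` shifted_lattice c a \<subseteq> shifted_lattice (2 *\<^sub>R c + b) (2 * a)"
  proof (rule image_subsetI)
    fix v assume v: "v \<in> shifted_lattice c a"
    have "\<exists>k::int. (2 *\<^sub>R v + b) $ i = (2 *\<^sub>R c + b) $ i + 2 * a * of_int k" for i
    proof -
      obtain k :: int where "v $ i = c $ i + a * of_int k"
        using v unfolding shifted_lattice_def by blast
      then show ?thesis by (intro exI[of _ k]) simp
    qed
    then show "2 *\<^sub>R v + b \<in> shifted_lattice (2 *\<^sub>R c + b) (2 * a)"
      unfolding shifted_lattice_def by blast
  qed
next
  show "shifted_lattice (2 *\<^sub>R c + b) (2 * a) \<subseteq> (\<lambda>v. 2 *\<^sub>R v + b) ` shifted_lattice c a"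
  proof
    fix w assume "w \<in> shifted_lattice (2 *\<^sub>R c + b) (2 * a)"
    then obtain k where k: "\<And>i. w $ i = 2 * c $ i + b $ i + 2 * a * of_int (k i)"
      unfolding shifted_lattice_def by simp metis
    define v where "v = (\<chi> i. c $ i + a * of_int (k i))"
    have "v \<in> shifted_lattice c a"
      unfolding shifted_lattice_def v_def by auto
    moreover have "w = 2 *\<^sub>R v + b"
      by (simp add: vec_eq_iff v_def k algebra_simps)
    ultimately show "w \<in> (\<lambda>v. 2 *\<^sub>R v + b) ` shifted_lattice c a"
      by blast
  qed
qed

lemma grid_family_step:
  assumes "grid_family lam G"
  obtains c0 e where "c0 \<in> G s" and "\<forall>i. e $ i = 1 \<or> e $ i = -1"
    and "G (s + 1) = (\<lambda>g. 2 *\<^sub>R g + ((scale lam s / 2) *\<^sub>R e - c0)) ` G s"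
proof -
  obtain c0 e where c0: "c0 \<in> G s" and e: "\<forall>i. e $ i = 1 \<or> e $ i = -1"
    and step: "G (s + 1) = (\<lambda>g. 2 *\<^sub>R (g - c0) + c0 + (scale lam s / 2) *\<^sub>R e) ` G s"
    using assms unfolding grid_family_def by blast
  have eq: "(\<lambda>g. 2 *\<^sub>R (g - c0) + c0 + (scale lam s / 2) *\<^sub>R e)
      = (\<lambda>g. 2 *\<^sub>R g + ((scale lam s / 2) *\<^sub>R e - c0))"
    by (simp add: fun_eq_iff vec_eq_iff algebra_simps)
  show thesis
    by (rule that[OF c0 e]) (simp only: step eq)
qed

lemma grid_family_shifted_lattice:
  assumes "grid_family lam G"
  shows "\<exists>c. G s = shifted_lattice c (scale lam s)"
proof (induction s rule: int_induct[where k = 0])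
  case base
  have "G 0 = scaled_lattice lam"
    using assms unfolding grid_family_def by blast
  then show ?case
    by (intro exI[of _ 0]) (simp add: scaled_lattice_eq_shifted_lattice scale_def)
next
  case (step1 s)
  then obtain c where "G s = shifted_lattice c (scale lam s)" by blast
  moreover obtain c0 e where "G (s + 1) = (\<lambda>g. 2 *\<^sub>R g + ((scale lam s / 2) *\<^sub>R e - c0)) ` G s"
    using assms by (rule grid_family_step)
  ultimately show ?case
    by (auto simp: image_doubling_shifted_lattice scale_add_one)
next
  case (step2 s)
  then obtain c where c: "G s = shifted_lattice c (scale lam s)" by blast
  obtain c0 e where step: "G (s - 1 + 1) = (\<lambda>g. 2 *\<^sub>R g + ((scale lam (s - 1) / 2) *\<^sub>R e - c0)) ` G (s - 1)"
    using assms by (rule grid_family_step)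
  define b where "b = (scale lam (s - 1) / 2) *\<^sub>R e - c0"
  have inj: "inj (\<lambda>g. 2 *\<^sub>R g + b)"
    by (rule injI) simp
  have "(\<lambda>g. 2 *\<^sub>R g + b) ` G (s - 1) = G s"
    using step by (simp add: b_def)
  also have "\<dots> = (\<lambda>g. 2 *\<^sub>R g + b) ` shifted_lattice ((1/2) *\<^sub>R (c - b)) (scale lam (s - 1))"
    using c scale_add_one[of lam "s - 1"] by (simp add: image_doubling_shifted_lattice)
  finally show ?case
    using inj by (auto simp: inj_image_eq_iff)
qed

lemma Vor_shifted_lattice:
  fixes c x :: "real ^ 'n"
  assumes a: "a > 0" and x: "x \<in> shifted_lattice c a"
  shows "Vor (shifted_lattice c a) x = {z. \<forall>i. \<bar>z $ i - x $ i\<bar> \<le> a / 2}"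
proof (intro equalityI subsetI)
  fix z assume "z \<in> {z. \<forall>i. \<bar>z $ i - x $ i\<bar> \<le> a / 2}"
  then have z: "\<bar>z $ i - x $ i\<bar> \<le> a / 2" for i by simp
  have "dist z x \<le> dist z g" if g: "g \<in> shifted_lattice c a" for g
  proof (rule dist_vec_le_coordinatewise)
    fix i
    obtain k where "g $ i - x $ i = a * of_int k"
      using g x by (rule shifted_lattice_diff)
    then have "z $ i - g $ i = (z $ i - x $ i) - a * of_int k" by simp
    then show "dist (z $ i) (x $ i) \<le> dist (z $ i) (g $ i)"
      unfolding dist_real_def using abs_le_abs_diff_int_multiple[OF a z] by presburger
  qed
  then show "z \<in> Vor (shifted_lattice c a) x"
    unfolding Vor_def by blast
next
  fix z assume z: "z \<in> Vor (shifted_lattice c a) x"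
  show "z \<in> {z. \<forall>i. \<bar>z $ i - x $ i\<bar> \<le> a / 2}"
  proof (rule CollectI, rule allI, rule ccontr)
    fix i assume far: "\<not> \<bar>z $ i - x $ i\<bar> \<le> a / 2"
    define d :: int where "d = (if z $ i > x $ i then 1 else -1)"
    define g where "g = x + (a * of_int d) *\<^sub>R axis i 1"
    have g_nth: "g $ j = x $ j + (if j = i then a * of_int d else 0)" for j
      unfolding g_def by (simp add: axis_def)
    have "dist z x \<le> dist z g"
      using z shifted_lattice_add_axis[OF x] unfolding Vor_def g_def by blast
    moreover have "dist z g < dist z x"
    proof (rule dist_vec_less_coordinatewise)
      show "dist (z $ i) (g $ i) < dist (z $ i) (x $ i)"
        using far a unfolding dist_real_def g_nth d_def by auto
      then show "dist (z $ j) (g $ j) \<le> dist (z $ j) (x $ j)" for j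
        by (cases "j = i") (simp_all add: g_nth)
    qed
    ultimately show False by simp
  qed
qed

lemma grid_step_offset_odd:
  assumes "x \<in> shifted_lattice c a" and "g \<in> shifted_lattice c a" and "c0 \<in> shifted_lattice c a"
    and "e $ i = 1 \<or> e $ i = -1"
  obtains m :: int where "odd m" and "(2 *\<^sub>R g + ((a / 2) *\<^sub>R e - c0)) $ i - x $ i = a / 2 * of_int m"
proof -
  obtain k1 where k1: "g $ i - x $ i = a * of_int k1"
    using assms(2,1) by (rule shifted_lattice_diff)
  obtain k2 where k2: "g $ i - c0 $ i = a * of_int k2"
    using assms(2,3) by (rule shifted_lattice_diff)
  obtain \<epsilon> :: int where \<epsilon>: "e $ i = of_int \<epsilon>" and "odd \<epsilon>"
    using assms(4) by (metis odd_one even_minus of_int_1 of_int_minus)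
  have "(2 *\<^sub>R g + ((a / 2) *\<^sub>R e - c0)) $ i - x $ i = (g $ i - x $ i) + (g $ i - c0 $ i) + a / 2 * e $ i"
    by simp
  also have "\<dots> = a / 2 * of_int (2 * (k1 + k2) + \<epsilon>)"
    unfolding k1 k2 \<epsilon> by (simp add: algebra_simps)
  finally show thesis
    using \<open>odd \<epsilon>\<close> by (intro that[of "2 * (k1 + k2) + \<epsilon>"]) simp_all
qed

theorem lemma3:
  fixes lam :: real and G :: "int \<Rightarrow> (real ^ 'n) set"
    and s :: int and x y :: "real ^ 'n"
  assumes "lam > 0"
    and "grid_family lam G"
    and "x \<in> G s" and "y \<in> G (s + 1)"
    and "x \<in> Vor (G (s + 1)) y"
  shows "Vor (G s) x \<subseteq> Vor (G (s + 1)) y"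
proof -
  define a where "a = scale lam s"
  have a: "a > 0"
    unfolding a_def using assms(1) by (rule scale_pos)
  obtain c where c: "G s = shifted_lattice c a"
    unfolding a_def using grid_family_shifted_lattice[OF assms(2)] by blast
  obtain c' where c': "G (s + 1) = shifted_lattice c' (2 * a)"
    unfolding a_def using grid_family_shifted_lattice[OF assms(2), of "s + 1"] by (auto simp: scale_add_one)
  obtain c0 e where c0: "c0 \<in> G s" and e: "\<forall>i. e $ i = 1 \<or> e $ i = -1"
    and step: "G (s + 1) = (\<lambda>g. 2 *\<^sub>R g + ((a / 2) *\<^sub>R e - c0)) ` G s"
    unfolding a_def using assms(2) by (rule grid_family_step)
  obtain g where g: "g \<in> G s" and y: "y = 2 *\<^sub>R g + ((a / 2) *\<^sub>R e - c0)"
    using assms(4) step by blast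
  have Vor_x: "Vor (G s) x = {z. \<forall>i. \<bar>z $ i - x $ i\<bar> \<le> a / 2}"
    using Vor_shifted_lattice[OF a] assms(3) c by simp
  have Vor_y: "Vor (G (s + 1)) y = {z. \<forall>i. \<bar>z $ i - y $ i\<bar> \<le> a}"
    using Vor_shifted_lattice[of "2 * a"] a assms(4) c' by simp
  have offset: "\<bar>y $ i - x $ i\<bar> = a / 2" for i
  proof -
    obtain m where "odd m" and m: "y $ i - x $ i = a / 2 * of_int m"
      using grid_step_offset_odd[of x c a g c0 e i] assms(3) g c0 e unfolding c y by blast
    moreover have "\<bar>y $ i - x $ i\<bar> \<le> a"
      using assms(5) Vor_y by (simp add: abs_minus_commute)
    ultimately show ?thesis
      unfolding m using abs_odd_half_multiple[OF a] by blast
  qed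
  then have "\<bar>z $ i - y $ i\<bar> \<le> a" if "\<bar>z $ i - x $ i\<bar> \<le> a / 2" for z i
    using that offset[of i] by arith
  then show ?thesis
    unfolding Vor_x Vor_y by blast
qed

end
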